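(* Let $\omega>0$, $0<\rho\le1$ and $A=\begin{pmatrix}0&-\rho^{-1}\omega\\ \rho\omega&0\end{pmatrix}$. Then for the autonomous system $\dot u=Au$ in $\mathbb R^2$, $$\vartheta_1^{\sup,\varlimsup}=\vartheta_1^{\sup,\varliminf}=\vartheta_1^{\varlimsup,\sup}=\vartheta_1^{\varliminf,\sup}=\omega.$$
   Context: For $A\in C([0,\infty),\mathbb R^{d\times d})$ let $\Phi(t,\tau)$ be the solution operator of $\dot u=A(t)u$ (here $\Phi(t,0)=e^{tA}$). $\mathcal G(s,d)$ is the Grassmannian of $s$-dimensional subspaces of $\mathbb R^d$, $P_V$ the orthogonal projection onto $V$, $\|\cdot\|$ the spectral norm. For $V\in\mathcal G(s,d)$ let $a_{0,T}(V)=\int_0^T\|(I_d-P_{\Phi(\tau,0)V})A(\tau)P_{\Phi(\tau,0)V}\|\,d\tau$, and $\vartheta_s^{\sup,\varlimsup}=\sup_{V}\varlimsup_{T\to\infty}\frac1Ta_{0,T}(V)$, $\vartheta_s^{\sup,\varliminf}=\sup_V\varliminf_{T\to\infty}\frac1Ta_{0,T}(V)$, $\vartheta_s^{\varlimsup,\sup}=\varlimsup_{T\to\infty}\sup_V\frac1Ta_{0,T}(V)$, $\vartheta_s^{\varliminf,\sup}=\varliminf_{T\to\infty}\sup_V\frac1Ta_{0,T}(V)$, suprema over $V\in\mathcal G(s,d)$. *)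

theory Defs
  imports "HOL-Analysis.Analysis" "HOL-Library.Extended_Real"
begin

fun mat_pow :: "real^'n^'n \<Rightarrow> nat \<Rightarrow> real^'n^'n" where
  "mat_pow M 0 = mat 1"
| "mat_pow M (Suc n) = M ** mat_pow M n"

(* matrix exponential e^{tA} = sum_n t^n/n! A^n; this is Phi(t,0) for the autonomous system u' = A u *)
definition mat_exp :: "real \<Rightarrow> real^'n^'n \<Rightarrow> real^'n^'n" where
  "mat_exp t M = (\<Sum>n. (t ^ n / fact n) *\<^sub>R mat_pow M n)"

definition grassmannian :: "nat \<Rightarrow> (real^'n) set set" where
  "grassmannian s = {V. subspace V \<and> dim V = s}"

definition orth_proj :: "(real^'n) set \<Rightarrow> real^'n \<Rightarrow> real^'n" where
  "orth_proj V x = (THE y. y \<in> V \<and> (\<forall>v\<in>V. (x - y) \<bullet> v = 0))"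

(* a_{0,T}(V) for the autonomous system with Phi(tau,0) = e^{tau A};
   the spectral norm is the operator norm onorm *)
definition a_int :: "real^'n^'n \<Rightarrow> (real^'n) set \<Rightarrow> real \<Rightarrow> real" where
  "a_int A V T = integral {0..T}
     (\<lambda>\<tau>. let W = (\<lambda>x. mat_exp \<tau> A *v x) ` V in
          onorm (\<lambda>x. (A *v orth_proj W x) - orth_proj W (A *v orth_proj W x)))"

definition theta_sup_limsup :: "nat \<Rightarrow> real^'n^'n \<Rightarrow> ereal" where
  "theta_sup_limsup s A = (SUP V\<in>grassmannian s. Limsup at_top (\<lambda>T. ereal (a_int A V T / T)))"

definition theta_sup_liminf :: "nat \<Rightarrow> real^'n^'n \<Rightarrow> ereal" where
  "theta_sup_liminf s A = (SUP V\<in>grassmannian s. Liminf at_top (\<lambda>T. ereal (a_int A V T / T)))"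

definition theta_limsup_sup :: "nat \<Rightarrow> real^'n^'n \<Rightarrow> ereal" where
  "theta_limsup_sup s A = Limsup at_top (\<lambda>T::real. SUP V\<in>grassmannian s. ereal (a_int A V T / T))"

definition theta_liminf_sup :: "nat \<Rightarrow> real^'n^'n \<Rightarrow> ereal" where
  "theta_liminf_sup s A = Liminf at_top (\<lambda>T::real. SUP V\<in>grassmannian s. ereal (a_int A V T / T))"

end

(* For a line V = span {u} the integrand of a_{0,T}(V) is the norm of the rank-one map (I - P) A P,
   which in the plane equals |det (u, A u)| / |u|^2: the angular speed of the orbit u(\<tau>) = e^{\<tau>A} v.
   Since A^2 = -\<omega>^2 I, the orbit runs around an ellipse with phase \<omega>\<tau>, and its polar angle stays within
   \<pi>/2 of \<omega>\<tau> + const. Hence a_{0,T}(V) = \<omega>T + O(1) uniformly in V, and all four limits equal \<omega>. *)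

theory Submission
  imports Defs "HOL-Real_Asymp.Real_Asymp"
begin

lemma orth_proj_span_singleton:
  fixes u :: "real^'n"
  assumes "u \<noteq> 0"
  shows "orth_proj (span {u}) x = ((x \<bullet> u) / (u \<bullet> u)) *\<^sub>R u"
  unfolding orth_proj_def
proof (rule the_equality)
  have uu: "u \<bullet> u \<noteq> 0" using assms by simp
  show "((x \<bullet> u) / (u \<bullet> u)) *\<^sub>R u \<in> span {u} \<and>
    (\<forall>v\<in>span {u}. (x - ((x \<bullet> u) / (u \<bullet> u)) *\<^sub>R u) \<bullet> v = 0)"
    using uu by (auto simp: span_singleton span_base span_mul inner_diff_left inner_scaleR_right)
  fix y assume y: "y \<in> span {u} \<and> (\<forall>v\<in>span {u}. (x - y) \<bullet> v = 0)"
  then obtain c where c: "y = c *\<^sub>R u" by (auto simp: span_singleton)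
  have "(x - y) \<bullet> u = 0" using y by (auto intro: span_base)
  then have "x \<bullet> u = c * (u \<bullet> u)" by (simp add: c inner_diff_left)
  then show "y = ((x \<bullet> u) / (u \<bullet> u)) *\<^sub>R u" using uu c by simp
qed

lemma onorm_inner_left:
  fixes u :: "'a::real_inner"
  shows "onorm (\<lambda>x. x \<bullet> u) = norm u"
proof (rule antisym)
  show "onorm (\<lambda>x. x \<bullet> u) \<le> norm u"
    by (rule onorm_bound) (simp_all add: Cauchy_Schwarz_ineq2 mult.commute)
  show "norm u \<le> onorm (\<lambda>x. x \<bullet> u)"
  proof (cases "u = 0")
    case False
    have "norm (u \<bullet> u) / norm u \<le> onorm (\<lambda>x. x \<bullet> u)"
      by (rule le_onorm[OF bounded_linear_inner_left])
    then show ?thesis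
      using False by (simp add: power2_norm_eq_inner[symmetric] power2_eq_square)
  qed (simp add: onorm_zero)
qed

lemma onorm_inner_scaleR:
  fixes u :: "'a::real_inner" and z :: "'b::real_normed_vector"
  shows "onorm (\<lambda>x. (x \<bullet> u) *\<^sub>R z) = norm u * norm z"
  using onorm_scaleR_left[OF bounded_linear_inner_left, of u z] by (simp add: onorm_inner_left)

lemma grassmannian_1_eq: "grassmannian 1 = {span {v} | v :: real^'n. v \<noteq> 0}"
proof (intro set_eqI iffI)
  fix V :: "(real^'n) set"
  assume "V \<in> grassmannian 1"
  then have sV: "subspace V" and dV: "dim V = 1" by (auto simp: grassmannian_def)
  obtain B where B: "B \<subseteq> V" "independent B" "V \<subseteq> span B" "card B = dim V"
    by (rule basis_exists)
  then obtain v where "B = {v}" using dV by (auto simp: card_1_singleton_iff)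
  moreover have "v \<noteq> 0" using B(2) \<open>B = {v}\<close> dependent_zero by blast
  moreover have "V = span {v}" using B sV \<open>B = {v}\<close> by (simp add: span_minimal subset_antisym)
  ultimately show "V \<in> {span {v} | v. v \<noteq> 0}" by blast
next
  fix V :: "(real^'n) set"
  assume "V \<in> {span {v} | v. v \<noteq> 0}"
  then show "V \<in> grassmannian 1" by (auto simp: grassmannian_def dim_span)
qed

lemma image_span_singleton_matrix:
  fixes M :: "real^'n^'m"
  shows "(\<lambda>x. M *v x) ` span {v} = span {M *v v}"
  using linear_span_image[of "\<lambda>x. M *v x" "{v}"] by simp

lemma inner_square_add_det_square:
  fixes u z :: "real^2"
  shows "(z \<bullet> u)^2 + (u$1 * z$2 - u$2 * z$1)^2 = (z \<bullet> z) * (u \<bullet> u)"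
  by (simp add: inner_vec_def sum_2 power2_eq_square) algebra

lemma onorm_compression_span_singleton:
  fixes M :: "real^2^2" and u :: "real^2"
  assumes "u \<noteq> 0"
  defines "P \<equiv> orth_proj (span {u})"
  shows "onorm (\<lambda>x. M *v P x - P (M *v P x)) = \<bar>u$1 * (M *v u)$2 - u$2 * (M *v u)$1\<bar> / (u \<bullet> u)"
proof -
  define z where "z = M *v u - (((M *v u) \<bullet> u) / (u \<bullet> u)) *\<^sub>R u"
  have uu: "u \<bullet> u > 0" using assms by simp
  define w where "w = (1 / (u \<bullet> u)) *\<^sub>R z"
  have "(\<lambda>x. M *v P x - P (M *v P x)) = (\<lambda>x. (x \<bullet> u) *\<^sub>R w)"
    by (simp add: P_def orth_proj_span_singleton[OF assms(1)] w_def z_def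
        matrix_vector_mult_scaleR inner_scaleR_left algebra_simps)
  then have "onorm (\<lambda>x. M *v P x - P (M *v P x)) = norm u * norm w"
    by (simp add: onorm_inner_scaleR)
  also have "\<dots> = norm u * norm z / (u \<bullet> u)"
    using uu by (simp add: w_def)
  finally have "onorm (\<lambda>x. M *v P x - P (M *v P x)) = norm u * norm z / (u \<bullet> u)" .
  moreover have "norm u * norm z = \<bar>u$1 * (M *v u)$2 - u$2 * (M *v u)$1\<bar>"
  proof -
    have "z \<bullet> u = 0" using uu by (simp add: z_def inner_diff_left)
    then have "(norm z * norm u)^2 = (u$1 * z$2 - u$2 * z$1)^2"
      using inner_square_add_det_square[of z u]
      by (simp add: power_mult_distrib power2_norm_eq_inner)
    also have "u$1 * z$2 - u$2 * z$1 = u$1 * (M *v u)$2 - u$2 * (M *v u)$1"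
      by (simp add: z_def algebra_simps)
    finally show ?thesis
      by (metis mult.commute norm_ge_zero real_sqrt_abs real_sqrt_unique zero_le_mult_iff)
  qed
  ultimately show ?thesis by simp
qed

lemma mat_pow_of_square_eq:
  fixes M :: "real^'n^'n"
  assumes "M ** M = (-(\<omega>^2)) *\<^sub>R mat 1"
  shows "mat_pow M n =
    (if even n then (-(\<omega>^2))^(n div 2) *\<^sub>R mat 1 else (-(\<omega>^2))^(n div 2) *\<^sub>R M)"
proof (induction n)
  case (Suc n)
  show ?case
  proof (cases "even n")
    case True
    then show ?thesis using Suc by (simp add: matrix_scalar_ac)
  next
    case False
    then have "Suc n div 2 = Suc (n div 2)" by presburger
    then show ?thesis
      using Suc False by (simp add: matrix_scalar_ac scalar_matrix_assoc[symmetric] assms)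
  qed
qed simp

lemma mat_exp_series_term_of_square_eq:
  fixes M :: "real^'n^'n"
  assumes "M ** M = (-(\<omega>^2)) *\<^sub>R mat 1" and "\<omega> \<noteq> 0"
  shows "(t ^ n / fact n) *\<^sub>R mat_pow M n =
    (cos_coeff n * (\<omega>*t)^n) *\<^sub>R mat 1 + (sin_coeff n * (\<omega>*t)^n / \<omega>) *\<^sub>R M"
proof -
  have power_eq: "(-(\<omega>^2))^k = (-1)^k * \<omega>^(2*k)" for k
    by (simp add: power_mult power_mult_distrib[symmetric])
  show ?thesis
  proof (cases "even n")
    case True
    then obtain k where "n = 2*k" by blast
    then show ?thesis
      by (simp add: mat_pow_of_square_eq[OF assms(1)] power_eq cos_coeff_def sin_coeff_def
          power_mult_distrib)
  next
    case False
    then obtain k where k: "n = Suc (2*k)" by (metis oddE Suc_eq_plus1)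
    have "mat_pow M n = (-(\<omega>^2))^k *\<^sub>R M"
      unfolding mat_pow_of_square_eq[OF assms(1)] using k by simp
    then show ?thesis
      using k assms(2) by (simp add: power_eq cos_coeff_def sin_coeff_def power_mult_distrib)
  qed
qed

lemma mat_exp_of_square_eq:
  fixes M :: "real^'n^'n"
  assumes "M ** M = (-(\<omega>^2)) *\<^sub>R mat 1" and "\<omega> \<noteq> 0"
  shows "mat_exp t M = cos (\<omega>*t) *\<^sub>R mat 1 + (sin (\<omega>*t) / \<omega>) *\<^sub>R M"
proof -
  have "(\<lambda>n. (t ^ n / fact n) *\<^sub>R mat_pow M n) sums (cos (\<omega>*t) *\<^sub>R mat 1 + (sin (\<omega>*t) / \<omega>) *\<^sub>R M)"
    unfolding mat_exp_series_term_of_square_eq[OF assms]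
    using cos_converges[of "\<omega>*t"] sin_converges[of "\<omega>*t"]
    by (intro sums_add sums_scaleR_left sums_divide) simp_all
  then show ?thesis unfolding mat_exp_def by (simp add: sums_iff)
qed

lemma mat_exp_mult_vec_of_square_eq:
  fixes M :: "real^'n^'n"
  assumes "M ** M = (-(\<omega>^2)) *\<^sub>R mat 1" and "\<omega> \<noteq> 0"
  shows "mat_exp t M *v v = cos (\<omega>*t) *\<^sub>R v + (sin (\<omega>*t) / \<omega>) *\<^sub>R (M *v v)"
  by (simp add: mat_exp_of_square_eq[OF assms] matrix_vector_mult_add_rdistrib
      scaleR_matrix_vector_assoc[symmetric])

lemma mat_exp_mult_vec_eq_0_iff_of_square_eq:
  fixes M :: "real^'n^'n"
  assumes "M ** M = (-(\<omega>^2)) *\<^sub>R mat 1" and "\<omega> \<noteq> 0"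
  shows "mat_exp t M *v v = 0 \<longleftrightarrow> v = 0"
proof -
  have "M *v (M *v v) = ((-(\<omega>^2)) *\<^sub>R mat 1) *v v"
    by (simp add: matrix_vector_mul_assoc assms(1))
  then have MM: "M *v (M *v v) = (-(\<omega>^2)) *\<^sub>R v"
    by (simp only: scaleR_matrix_vector_assoc[symmetric]) simp
  have "mat_exp (-t) M *v (mat_exp t M *v v)
      = (cos (\<omega>*t) * cos (\<omega>*t)) *\<^sub>R v + (sin (\<omega>*t) * sin (\<omega>*t)) *\<^sub>R v"
    using assms(2)
    by (simp add: mat_exp_mult_vec_of_square_eq[OF assms] matrix_vector_right_distrib
        matrix_vector_mult_scaleR MM power2_eq_square algebra_simps)
  also have "\<dots> = v" by (simp flip: scaleR_add_left)
  finally have "mat_exp (-t) M *v (mat_exp t M *v v) = v" .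
  then show ?thesis by (metis matrix_vector_mult_0_right)
qed

lemma DERIV_arctan_divide:
  assumes "(f has_real_derivative f') (at t)" and "(g has_real_derivative g') (at t)"
    and "g t \<noteq> 0"
  shows "((\<lambda>t. arctan (f t / g t)) has_real_derivative
    (f' * g t - f t * g') / ((g t)^2 + (f t)^2)) (at t)"
proof -
  have "((\<lambda>t. arctan (f t / g t)) has_real_derivative
      inverse (1 + (f t / g t)^2) * ((f' * g t - f t * g') / (g t * g t))) (at t)"
    using DERIV_arctan[THEN DERIV_chain2, OF DERIV_divide[OF assms]] by simp
  moreover have "1 + (f t / g t)^2 = ((g t)^2 + (f t)^2) / (g t)^2"
    using assms(3) by (simp add: field_simps)
  ultimately show ?thesis
    using assms(3) by (simp add: power2_eq_square)
qed

text \<open>A solution of \<open>a' = -(\<omega>/\<rho>) b\<close>, \<open>b' = \<rho>\<omega> a\<close> has \<open>a = r cos \<psi>\<close>, \<open>b = \<rho> r sin \<psi>\<close> with phase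
  \<open>\<psi> = \<omega>t + const\<close>, so its polar angle \<open>\<theta>\<close> satisfies \<open>tan \<theta> = \<rho> tan \<psi>\<close>; then
  \<open>angle_offset \<rho> a b = arctan (tan (\<theta> - \<psi>))\<close> is the gap between angle and phase.\<close>

definition angle_offset :: "real \<Rightarrow> real \<Rightarrow> real \<Rightarrow> real" where
  "angle_offset \<rho> a b = arctan ((\<rho> - 1) * a * b / (\<rho> * a^2 + b^2))"

lemma abs_arctan_less_pi_half: "\<bar>arctan y\<bar> < pi/2"
  using arctan_lbound[of y] arctan_ubound[of y] by linarith

lemma angular_velocity_identity:
  fixes a b \<rho> \<omega> :: real
  assumes "\<rho> > 0" and "a^2 + b^2 > 0"
  defines "N \<equiv> (\<rho> - 1) * a * b" and "D \<equiv> \<rho> * a^2 + b^2"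
  shows "\<omega> + ((\<rho> - 1) * ((-(\<omega>/\<rho>) * b) * b + a * (\<rho>*\<omega>*a)) * D
      - N * (2*\<rho>*a*(-(\<omega>/\<rho>)*b) + 2*b*(\<rho>*\<omega>*a))) / (D^2 + N^2)
    = (\<rho>*\<omega>*a^2 + \<omega>/\<rho>*b^2) / (a^2 + b^2)"
proof -
  define k where "k = \<omega>/\<rho>"
  have \<omega>: "\<rho>*\<omega> = \<rho>*\<rho>*k" "\<omega> = \<rho>*k" using assms(1) by (simp_all add: k_def)
  have P: "\<rho>^2*a^2 + b^2 > 0"
    using assms(1,2) by (cases "a = 0") (simp_all add: add_pos_nonneg)
  have "D^2 + N^2 = (\<rho>^2*a^2 + b^2) * (a^2 + b^2)" unfolding D_def N_def by algebra
  moreover have "(\<rho> - 1) * ((-k * b) * b + a * (\<rho>*\<rho>*k*a)) * D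
      - N * (2*\<rho>*a*(-k*b) + 2*b*(\<rho>*\<rho>*k*a))
      = k*(\<rho> - 1)*(\<rho>*a^2 - b^2)*(\<rho>^2*a^2 + b^2)"
    unfolding D_def N_def by algebra
  ultimately have "((\<rho> - 1) * ((-k * b) * b + a * (\<rho>*\<rho>*k*a)) * D
      - N * (2*\<rho>*a*(-k*b) + 2*b*(\<rho>*\<rho>*k*a))) / (D^2 + N^2)
      = k*(\<rho> - 1)*(\<rho>*a^2 - b^2) / (a^2 + b^2)"
    using P by simp
  moreover have "\<rho>*k + k*(\<rho> - 1)*(\<rho>*a^2 - b^2) / (a^2 + b^2)
      = (\<rho>*k*(a^2 + b^2) + k*(\<rho> - 1)*(\<rho>*a^2 - b^2)) / (a^2 + b^2)"
    using assms(2) by (simp only: add_divide_eq_iff[of "a^2 + b^2"])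
  moreover have "\<rho>*k*(a^2 + b^2) + k*(\<rho> - 1)*(\<rho>*a^2 - b^2) = \<rho>*\<rho>*k*a^2 + k*b^2"
    by algebra
  ultimately show ?thesis unfolding k_def[symmetric] \<omega>(1) unfolding \<omega>(2) by simp
qed

lemma has_real_derivative_phase_add_angle_offset:
  fixes a b :: "real \<Rightarrow> real"
  assumes a': "(a has_real_derivative - (\<omega>/\<rho>) * b t) (at t)"
    and b': "(b has_real_derivative \<rho>*\<omega> * a t) (at t)"
    and "\<rho> > 0" and "a t \<noteq> 0 \<or> b t \<noteq> 0"
  shows "((\<lambda>t. \<omega>*t + angle_offset \<rho> (a t) (b t)) has_real_derivative
    (\<rho>*\<omega>*(a t)^2 + \<omega>/\<rho>*(b t)^2) / ((a t)^2 + (b t)^2)) (at t)"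
proof -
  have "(a t)^2 + (b t)^2 > 0" using assms(4) by (auto intro: add_pos_nonneg add_nonneg_pos)
  have "\<rho> * (a t)^2 + (b t)^2 > 0"
    using assms(3,4) by (cases "a t = 0") (simp_all add: add_pos_nonneg)
  have "((\<lambda>t. (\<rho> - 1) * a t * b t) has_real_derivative
      (\<rho> - 1) * ((-(\<omega>/\<rho>) * b t) * b t + a t * (\<rho>*\<omega>*a t))) (at t)"
    using DERIV_mult[OF DERIV_cmult[OF a', of "\<rho> - 1"] b'] by (simp add: algebra_simps)
  moreover have "((\<lambda>t. \<rho> * (a t)^2 + (b t)^2) has_real_derivative
      2*\<rho>*a t*(-(\<omega>/\<rho>)*b t) + 2*b t*(\<rho>*\<omega>*a t)) (at t)"
    using DERIV_add[OF DERIV_cmult[OF DERIV_mult[OF a' a'], of \<rho>] DERIV_mult[OF b' b']]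
    by (simp add: power2_eq_square algebra_simps)
  moreover have "\<rho> * (a t)^2 + (b t)^2 \<noteq> 0" using \<open>\<rho> * (a t)^2 + (b t)^2 > 0\<close> by simp
  ultimately show ?thesis
    unfolding angle_offset_def
      angular_velocity_identity[OF assms(3) \<open>(a t)^2 + (b t)^2 > 0\<close>, of \<omega>, symmetric]
    by (rule DERIV_add[OF DERIV_cmult_Id DERIV_arctan_divide])
qed

lemma tendsto_SUP_ratio_of_bounded_deviation:
  fixes f :: "'a \<Rightarrow> real \<Rightarrow> real"
  assumes "S \<noteq> {}" and bound: "\<And>V T. V \<in> S \<Longrightarrow> T > 0 \<Longrightarrow> \<bar>f V T - c*T\<bar> \<le> d"
  shows "((\<lambda>T. SUP V\<in>S. ereal (f V T / T)) \<longlongrightarrow> ereal c) at_top"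
proof (rule tendsto_sandwich)
  have ratio_bounds: "c - d/T \<le> f V T / T \<and> f V T / T \<le> c + d/T" if "V \<in> S" "T > 0" for V T
    using bound[OF that] that(2)
    by (simp add: abs_le_iff pos_le_divide_eq pos_divide_le_eq left_diff_distrib distrib_right)
  show "\<forall>\<^sub>F T in at_top. ereal (c - d/T) \<le> (SUP V\<in>S. ereal (f V T / T))"
    using eventually_gt_at_top[of 0]
    by eventually_elim (use assms(1) ratio_bounds in \<open>meson SUP_upper2 all_not_in_conv ereal_less_eq(3)\<close>)
  show "\<forall>\<^sub>F T in at_top. (SUP V\<in>S. ereal (f V T / T)) \<le> ereal (c + d/T)"
    using eventually_gt_at_top[of 0]
    by eventually_elim (use ratio_bounds in \<open>simp add: SUP_le_iff\<close>)
  show "((\<lambda>T. ereal (c - d/T)) \<longlongrightarrow> ereal c) at_top"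
    by (intro tendsto_ereal) real_asymp
  show "((\<lambda>T. ereal (c + d/T)) \<longlongrightarrow> ereal c) at_top"
    by (intro tendsto_ereal) real_asymp
qed

lemma thetas_eq_of_bounded_deviation:
  fixes A :: "real^'n^'n"
  assumes "grassmannian s \<noteq> ({} :: (real^'n) set set)"
    and bound: "\<And>V T. V \<in> grassmannian s \<Longrightarrow> T > 0 \<Longrightarrow> \<bar>a_int A V T - c*T\<bar> \<le> d"
  shows "theta_sup_limsup s A = c \<and> theta_sup_liminf s A = c
    \<and> theta_limsup_sup s A = c \<and> theta_liminf_sup s A = c"
proof -
  have "((\<lambda>T. ereal (a_int A V T / T)) \<longlongrightarrow> ereal c) at_top" if "V \<in> grassmannian s" for V
    using tendsto_SUP_ratio_of_bounded_deviation[of "{V}" "a_int A" c d] bound that by simp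
  then have "Limsup at_top (\<lambda>T. ereal (a_int A V T / T)) = c"
    and "Liminf at_top (\<lambda>T. ereal (a_int A V T / T)) = c" if "V \<in> grassmannian s" for V
    using that by (simp_all add: lim_imp_Limsup lim_imp_Liminf)
  moreover have "((\<lambda>T. SUP V\<in>grassmannian s. ereal (a_int A V T / T)) \<longlongrightarrow> ereal c) at_top"
    using tendsto_SUP_ratio_of_bounded_deviation[OF assms] .
  ultimately show ?thesis
    using assms(1)
    by (simp add: theta_sup_limsup_def theta_sup_liminf_def theta_limsup_sup_def
        theta_liminf_sup_def lim_imp_Limsup lim_imp_Liminf)
qed

context
  fixes \<omega> \<rho> :: real and A :: "real^2^2"
  assumes \<omega>_pos: "\<omega> > 0" and \<rho>_pos: "\<rho> > 0"
    and A_eq: "A = vector [vector [0, - \<omega> / \<rho>], vector [\<rho> * \<omega>, 0]]"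
begin

lemma A_mult_vec: "(A *v v)$1 = - \<omega>/\<rho> * v$2" "(A *v v)$2 = \<rho>*\<omega> * v$1"
  by (simp_all add: A_eq matrix_vector_mult_def sum_2)

lemma A_square: "A ** A = (-(\<omega>^2)) *\<^sub>R mat 1"
  using \<rho>_pos
  by (simp add: A_eq matrix_matrix_mult_def vec_eq_iff forall_2 sum_2 mat_def power2_eq_square)

lemma flow_components:
  "(mat_exp t A *v v)$1 = cos (\<omega>*t) * v$1 - sin (\<omega>*t) / \<rho> * v$2"
  "(mat_exp t A *v v)$2 = cos (\<omega>*t) * v$2 + \<rho> * sin (\<omega>*t) * v$1"
  using \<omega>_pos by (simp_all add: mat_exp_mult_vec_of_square_eq[OF A_square] A_mult_vec)

lemma flow_component_derivatives:
  "((\<lambda>t. (mat_exp t A *v v)$1) has_real_derivative - (\<omega>/\<rho>) * (mat_exp t A *v v)$2) (at t)"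
  "((\<lambda>t. (mat_exp t A *v v)$2) has_real_derivative \<rho>*\<omega> * (mat_exp t A *v v)$1) (at t)"
  unfolding flow_components using \<rho>_pos
  by (auto intro!: derivative_eq_intros simp: field_simps)

lemma compression_norm_along_flow:
  fixes \<tau> :: real
  assumes "v \<noteq> 0"
  defines "u \<equiv> mat_exp \<tau> A *v v"
  shows "(let W = (\<lambda>x. mat_exp \<tau> A *v x) ` span {v} in
      onorm (\<lambda>x. A *v orth_proj W x - orth_proj W (A *v orth_proj W x)))
    = (\<rho>*\<omega>*(u$1)^2 + \<omega>/\<rho>*(u$2)^2) / ((u$1)^2 + (u$2)^2)"
proof -
  have "u \<noteq> 0"
    using assms \<omega>_pos by (simp add: mat_exp_mult_vec_eq_0_iff_of_square_eq[OF A_square])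
  moreover have "\<rho>*\<omega>*(u$1)^2 + \<omega>/\<rho>*(u$2)^2 \<ge> 0" using \<omega>_pos \<rho>_pos by simp
  ultimately show ?thesis
    unfolding Let_def image_span_singleton_matrix u_def[symmetric]
    by (simp add: onorm_compression_span_singleton A_mult_vec inner_vec_def sum_2
        power2_eq_square algebra_simps)
qed

lemma a_int_span_singleton:
  assumes "v \<noteq> 0" and "T \<ge> 0"
  shows "a_int A (span {v}) T = \<omega>*T + angle_offset \<rho> ((mat_exp T A *v v)$1) ((mat_exp T A *v v)$2)
    - angle_offset \<rho> (v$1) (v$2)"
proof -
  define u where "u t = mat_exp t A *v v" for t
  define F where "F t = \<omega>*t + angle_offset \<rho> (u t$1) (u t$2)" for t
  have "u t \<noteq> 0" for t
    using assms(1) \<omega>_pos by (simp add: u_def mat_exp_mult_vec_eq_0_iff_of_square_eq[OF A_square])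
  then have "u t$1 \<noteq> 0 \<or> u t$2 \<noteq> 0" for t
    by (auto simp: vec_eq_iff forall_2)
  then have "(F has_real_derivative
      (\<rho>*\<omega>*(u t$1)^2 + \<omega>/\<rho>*(u t$2)^2) / ((u t$1)^2 + (u t$2)^2)) (at t)" for t
    unfolding F_def u_def
    by (intro has_real_derivative_phase_add_angle_offset flow_component_derivatives \<rho>_pos)
  then have "((\<lambda>t. (\<rho>*\<omega>*(u t$1)^2 + \<omega>/\<rho>*(u t$2)^2) / ((u t$1)^2 + (u t$2)^2))
      has_integral F T - F 0) {0..T}"
    using assms(2)
    by (intro fundamental_theorem_of_calculus)
      (auto simp: has_real_derivative_iff_has_vector_derivative has_vector_derivative_at_within)
  moreover have "u 0 = v" by (simp add: u_def vec_eq_iff forall_2 flow_components)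
  ultimately show ?thesis
    unfolding a_int_def compression_norm_along_flow[OF assms(1)]
    by (simp add: integral_unique F_def u_def)
qed

lemma a_int_deviation_le_pi:
  assumes "V \<in> grassmannian 1" and "T \<ge> 0"
  shows "\<bar>a_int A V T - \<omega>*T\<bar> \<le> pi"
proof -
  have offset_bound: "\<bar>angle_offset \<rho> a b\<bar> < pi/2" for a b
    unfolding angle_offset_def by (rule abs_arctan_less_pi_half)
  obtain v where "v \<noteq> 0" and "V = span {v}" using assms(1) unfolding grassmannian_1_eq by blast
  then have "a_int A V T = \<omega>*T + angle_offset \<rho> ((mat_exp T A *v v)$1) ((mat_exp T A *v v)$2)
      - angle_offset \<rho> (v$1) (v$2)"
    by (simp add: a_int_span_singleton assms(2))
  then show ?thesis
    using offset_bound[of "(mat_exp T A *v v)$1" "(mat_exp T A *v v)$2"]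
      offset_bound[of "v$1" "v$2"]
    by linarith
qed

end

theorem mainTheorem10:
  fixes \<omega> \<rho> :: real and A :: "real^2^2"
  assumes "\<omega> > 0" and "0 < \<rho>" and "\<rho> \<le> 1"
    and "A = vector [vector [0, - \<omega> / \<rho>], vector [\<rho> * \<omega>, 0]]"
  shows "theta_sup_limsup 1 A = ereal \<omega> \<and> theta_sup_liminf 1 A = ereal \<omega>
         \<and> theta_limsup_sup 1 A = ereal \<omega> \<and> theta_liminf_sup 1 A = ereal \<omega>"
proof (rule thetas_eq_of_bounded_deviation)
  have "span {axis 1 1} \<in> (grassmannian 1 :: (real^2) set set)"
    unfolding grassmannian_1_eq by auto
  then show "grassmannian 1 \<noteq> ({} :: (real^2) set set)" by blast
  show "\<bar>a_int A V T - \<omega>*T\<bar> \<le> pi" if "V \<in> grassmannian 1" and "T > 0" for V T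
    using a_int_deviation_le_pi[OF assms(1,2,4) that(1)] that(2) by simp
qed

end
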